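(* Let $I=\langle N,M,V\rangle$ be an ordered instance of chores and let $B\subseteq M$ be a bundle with $v_i(B)\ge\mu_i$ for some agent $i\in N$. If every agent $i'\in N\setminus\{i\}$ has an MMS partition containing a bundle $B_{i'}$ with $B\succeq B_{i'}$, then allocating $B$ to $i$ is a valid reduction.
   Context: An instance of chores $I=\langle N,M,V\rangle$ has agents $N=\{1,\dots,n\}$, chores $M=\{1,\dots,m\}$ and additive valuations $v_i$ with $v_i(\emptyset)=0$, $v_i(S)=\sum_{g\in S}v_i(\{g\})$ and $v_{ij}:=v_i(\{j\})\le 0$. It is ordered if $v_{ij}\le v_{i(j+1)}$ for all $i$ and $1\le j<m$. An allocation ($n$-partition) is an ordered $n$-tuple of pairwise disjoint, possibly empty subsets of $M$ with union $M$. The maximin share of $i$ in $I$ is $\mu_i=\mu_i^I=\max_A\min_j v_i(A_j)$ over all allocations; an MMS partition of $i$ is an allocation $A$ with $v_i(A_j)\ge\mu_i$ for all $j$. For $B,B'\subseteq M$, $B\succeq B'$ means there is an injective map $f:B'\to B$ with $f(j)\le j$ for all $j\in B'$. Removing agents $N'\subseteq N$ and items $M'\subseteq M$ is a valid reduction if the items of $M'$ can be allocated to the agents of $N'$ so that each $i'\in N'$ receives a bundle $B_{i'}$ with $v_{i'}(B_{i'})\ge\mu_{i'}^I$, and every $i\in N\setminus N'$ satisfies $\mu_i^{I'}\ge\mu_i^I$, where $I'=\langle N\setminus N', M\setminus M', V\rangle$ (valuations restricted, maximin share computed with $|N\setminus N'|$ bundles). "Allocating $B$ to $i$ is a valid reduction"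 means this holds with $N'=\{i\}$, $M'=B$. *)

theory Defs
  imports Complex_Main
begin

(* Agents are 1..n, chores are 1..m; v i j is the (nonpositive) value of chore j for agent i. *)

definition bval :: "(nat \<Rightarrow> nat \<Rightarrow> real) \<Rightarrow> nat \<Rightarrow> nat set \<Rightarrow> real" where
  "bval v i S = (\<Sum>g\<in>S. v i g)"

(* A is a k-partition (allocation) of the item set S, bundles indexed by 1..k, possibly empty *)
definition is_alloc :: "nat \<Rightarrow> nat set \<Rightarrow> (nat \<Rightarrow> nat set) \<Rightarrow> bool" where
  "is_alloc k S A \<longleftrightarrow>
     (\<forall>j\<in>{1..k}. \<forall>j'\<in>{1..k}. j \<noteq> j' \<longrightarrow> A j \<inter> A j' = {}) \<and>
     (\<Union>j\<in>{1..k}. A j) = S"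

definition mms :: "(nat \<Rightarrow> nat \<Rightarrow> real) \<Rightarrow> nat \<Rightarrow> nat \<Rightarrow> nat set \<Rightarrow> real" where
  "mms v i k S = Max {Min ((\<lambda>j. bval v i (A j)) ` {1..k}) | A. is_alloc k S A}"

definition mms_partition :: "(nat \<Rightarrow> nat \<Rightarrow> real) \<Rightarrow> nat \<Rightarrow> nat \<Rightarrow> nat set \<Rightarrow> (nat \<Rightarrow> nat set) \<Rightarrow> bool" where
  "mms_partition v i k S A \<longleftrightarrow> is_alloc k S A \<and> (\<forall>j\<in>{1..k}. bval v i (A j) \<ge> mms v i k S)"

definition dominates :: "nat set \<Rightarrow> nat set \<Rightarrow> bool" where
  "dominates B B' \<longleftrightarrow> (\<exists>f. inj_on f B' \<and> f ` B' \<subseteq> B \<and> (\<forall>j\<in>B'. f j \<le> j))"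

definition ordered_instance :: "nat \<Rightarrow> nat \<Rightarrow> (nat \<Rightarrow> nat \<Rightarrow> real) \<Rightarrow> bool" where
  "ordered_instance n m v \<longleftrightarrow>
     (\<forall>i\<in>{1..n}. \<forall>j\<in>{1..m}. v i j \<le> 0) \<and>
     (\<forall>i\<in>{1..n}. \<forall>j. 1 \<le> j \<and> j < m \<longrightarrow> v i j \<le> v i (j + 1))"

definition valid_single_reduction :: "nat \<Rightarrow> nat \<Rightarrow> (nat \<Rightarrow> nat \<Rightarrow> real) \<Rightarrow> nat \<Rightarrow> nat set \<Rightarrow> bool" where
  "valid_single_reduction n m v i B \<longleftrightarrow>
     bval v i B \<ge> mms v i n {1..m} \<and>
     (\<forall>i'\<in>{1..n} - {i}. mms v i' (n - 1) ({1..m} - B) \<ge> mms v i' n {1..m})"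

end

theory Submission
  imports Defs "HOL-Library.Disjoint_Sets"
begin

text \<open>
  Fix an agent i' other than i, an MMS partition A of i' and a bundle A j with B \<succeq> A j.
  Cancelling the common items, there is an injection g from A j - B into B - A j that never
  moves an item to a larger index, hence never to a more costly chore. Drop the bundle A j,
  remove the items of B from the other bundles, and put each x in A j - B into the bundle that
  contained g x. Every remaining bundle loses at least the chores g x and gains the chores x,
  which are no more costly, so its value stays at least the MMS of i'. This gives an
  (n - 1)-partition of the remaining items witnessing that the MMS of i' does not decrease.
\<close>

lemma dominates_remove_common:
  assumes "dominates B S" "b \<in> S" "b \<in> B"
  shows "dominates (B - {b}) (S - {b})"
proof -
  obtain f where f: "inj_on f S" "f ` S \<subseteq> B" "\<forall>x\<in>S. f x \<le> x"
    using assms(1) unfolding dominates_def by blast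
  define f' where "f' x = (if f x = b then f b else f x)" for x
  have fx_ne_fb: "f x \<noteq> f b" if "x \<in> S - {b}" for x
    using f(1) assms(2) that by (auto dest: inj_onD)
  have "inj_on f' (S - {b})"
    using f(1) assms(2) unfolding f'_def inj_on_def by (metis DiffE insertI1)
  moreover have "f' x \<in> B - {b} \<and> f' x \<le> x" if x: "x \<in> S - {b}" for x
  proof (cases "f x = b")
    case True
    then have "f' x = f b" by (simp add: f'_def)
    moreover have "f b \<noteq> b" using True fx_ne_fb[OF x] by simp
    moreover have "f b \<le> x" using f(3) assms(2) x True by (metis DiffD1 le_trans)
    ultimately show ?thesis using f(2) assms(2) by auto
  next
    case False
    then have "f' x = f x" using fx_ne_fb[OF x] by (simp add: f'_def)
    then show ?thesis using f(2,3) x False by auto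
  qed
  ultimately show ?thesis unfolding dominates_def by blast
qed

lemma dominates_diff:
  assumes "finite S" "dominates B S"
  shows "dominates (B - S) (S - B)"
proof -
  have "finite (S \<inter> B)"
    using assms(1) by simp
  have "dominates (B - T) (S - T)" if "T \<subseteq> S \<inter> B" for T
    using finite_subset[OF that \<open>finite (S \<inter> B)\<close>] that
  proof (induction T rule: finite_induct)
    case empty
    then show ?case using assms(2) by simp
  next
    case (insert b T)
    then have "dominates ((B - T) - {b}) ((S - T) - {b})"
      by (intro dominates_remove_common) auto
    then show ?case by (metis Diff_insert)
  qed
  from this[of "S \<inter> B"] show ?thesis
    by (simp add: Diff_Int)
qed

lemma sum_le_exchange:
  fixes w :: "'a \<Rightarrow> 'b::ordered_ab_group_add"
  assumes "finite P" "finite X" "P \<inter> X = {}" "\<forall>x\<in>P. w x \<le> 0"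
    and "inj_on g X" "g ` X \<subseteq> P \<inter> B" "\<forall>x\<in>X. w (g x) \<le> w x"
  shows "sum w P \<le> sum w ((P - B) \<union> X)"
proof -
  have "sum w (P \<inter> B) = sum w (P \<inter> B - g ` X) + sum w (g ` X)"
    using assms(1,6) by (intro sum.subset_diff) auto
  also have "\<dots> \<le> sum w (g ` X)"
    using assms(4) sum_nonpos[of "P \<inter> B - g ` X" w] by simp
  also have "\<dots> = sum (w \<circ> g) X"
    using assms(5) by (rule sum.reindex)
  also have "\<dots> \<le> sum w X"
    using assms(7) by (intro sum_mono) simp
  finally have "sum w (P \<inter> B) \<le> sum w X" .
  moreover have "sum w P = sum w (P - B) + sum w (P \<inter> B)"
    using sum.Int_Diff[OF assms(1), of w B] by (simp add: add.commute)
  moreover have "sum w ((P - B) \<union> X) = sum w (P - B) + sum w X"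
    using assms(1-3) by (intro sum.union_disjoint) auto
  ultimately show ?thesis by (simp add: add_left_mono)
qed

lemma finite_alloc_min_values:
  assumes "finite S" "k \<ge> 1"
  shows "finite {Min ((\<lambda>j. bval v i (A j)) ` {1..k}) | A. is_alloc k S A}"
proof (rule finite_subset)
  show "{Min ((\<lambda>j. bval v i (A j)) ` {1..k}) | A. is_alloc k S A} \<subseteq> bval v i ` Pow S"
  proof safe
    fix A assume A: "is_alloc k S A"
    have "Min ((\<lambda>j. bval v i (A j)) ` {1..k}) \<in> (\<lambda>j. bval v i (A j)) ` {1..k}"
      using assms(2) by (intro Min_in) auto
    moreover have "A j \<in> Pow S" if "j \<in> {1..k}" for j
      using A that unfolding is_alloc_def by blast
    ultimately show "Min ((\<lambda>j. bval v i (A j)) ` {1..k}) \<in> bval v i ` Pow S"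
      by blast
  qed
  show "finite (bval v i ` Pow S)"
    using assms(1) by simp
qed

lemma mms_geI:
  assumes "finite S" "finite K" "card K = k" "k \<ge> 1"
    and "disjoint_family_on D K" "(\<Union>l\<in>K. D l) = S" "\<forall>l\<in>K. mu \<le> bval v i (D l)"
  shows "mu \<le> mms v i k S"
proof -
  obtain h where h: "bij_betw h {1..k} K"
    using ex_bij_betw_nat_finite_1[OF assms(2)] assms(3) by blast
  have "is_alloc k S (D \<circ> h)"
    unfolding is_alloc_def
  proof (intro conjI ballI impI)
    fix l l' assume "l \<in> {1..k}" "l' \<in> {1..k}" "l \<noteq> l'"
    then have "h l \<noteq> h l'" "h l \<in> K" "h l' \<in> K"
      using h unfolding bij_betw_def by (auto dest: inj_onD)
    then show "(D \<circ> h) l \<inter> (D \<circ> h) l' = {}"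
      using assms(5) unfolding disjoint_family_on_def by simp
  next
    show "(\<Union>l\<in>{1..k}. (D \<circ> h) l) = S"
      using assms(6) bij_betw_imp_surj_on[OF h] by (metis image_comp)
  qed
  moreover have "mu \<le> Min ((\<lambda>l. bval v i ((D \<circ> h) l)) ` {1..k})"
    using assms(4,7) bij_betw_apply[OF h] by (subst Min_ge_iff) auto
  ultimately show ?thesis
    unfolding mms_def by (blast intro: order.trans Max_ge finite_alloc_min_values[OF assms(1,4)])
qed

lemma ordered_instance_mono:
  assumes "ordered_instance n m v" "i \<in> {1..n}" "a \<in> {1..m}" "b \<in> {1..m}" "a \<le> b"
  shows "v i a \<le> v i b"
  using assms(5,4)
proof (induction b rule: dec_induct)
  case (step c)
  then have "v i a \<le> v i c" "v i c \<le> v i (c + 1)"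
    using assms(1-3) unfolding ordered_instance_def by auto
  then show ?case by simp
qed simp

lemma redistribute_bundle_partition:
  assumes A: "is_alloc n M A" and j: "j \<in> {1..n}" and B: "B \<subseteq> M"
    and g: "g ` (A j - B) \<subseteq> B - A j"
  defines "C l \<equiv> (A l - B) \<union> {x \<in> A j - B. g x \<in> A l}"
  shows "disjoint_family_on C ({1..n} - {j})" "(\<Union>l\<in>{1..n} - {j}. C l) = M - B"
proof -
  have A_disj: "A l \<inter> A l' = {}" if "l \<in> {1..n}" "l' \<in> {1..n}" "l \<noteq> l'" for l l'
    using A that unfolding is_alloc_def by blast
  have A_cover: "(\<Union>l\<in>{1..n}. A l) = M"
    using A unfolding is_alloc_def by blast
  show "disjoint_family_on C ({1..n} - {j})"
  proof (unfold disjoint_family_on_def, intro ballI impI)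
    fix l l' assume "l \<in> {1..n} - {j}" "l' \<in> {1..n} - {j}" "l \<noteq> l'"
    then have "A l \<inter> A l' = {}" "A l \<inter> A j = {}" "A l' \<inter> A j = {}"
      using A_disj j by auto
    then show "C l \<inter> C l' = {}"
      unfolding C_def by blast
  qed
  show "(\<Union>l\<in>{1..n} - {j}. C l) = M - B"
  proof
    show "(\<Union>l\<in>{1..n} - {j}. C l) \<subseteq> M - B"
      unfolding C_def using A_cover j by blast
  next
    show "M - B \<subseteq> (\<Union>l\<in>{1..n} - {j}. C l)"
    proof
      fix x assume x: "x \<in> M - B"
      then obtain l0 where l0: "l0 \<in> {1..n}" "x \<in> A l0"
        using A_cover by blast
      show "x \<in> (\<Union>l\<in>{1..n} - {j}. C l)"
      proof (cases "l0 = j")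
        case True
        then have "g x \<in> M - A j"
          using g x l0 B by blast
        then obtain l where "l \<in> {1..n} - {j}" "g x \<in> A l"
          using A_cover by blast
        with x l0 True show ?thesis
          unfolding C_def by blast
      next
        case False
        with x l0 show ?thesis
          unfolding C_def by blast
      qed
    qed
  qed
qed

lemma mms_ge_remove_dominating_bundle:
  assumes M: "finite M" and nonpos: "\<forall>a\<in>M. v i a \<le> 0"
    and mono: "\<forall>a\<in>M. \<forall>b\<in>M. a \<le> b \<longrightarrow> v i a \<le> v i b"
    and A: "is_alloc n M A" and bundles: "\<forall>l\<in>{1..n}. mu \<le> bval v i (A l)"
    and j: "j \<in> {1..n}" and n: "n \<ge> 2"
    and B: "B \<subseteq> M" and dom: "dominates B (A j)"
  shows "mu \<le> mms v i (n - 1) (M - B)"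
proof -
  have A_sub: "A l \<subseteq> M" if "l \<in> {1..n}" for l
    using A that unfolding is_alloc_def by blast
  have A_disj: "A l \<inter> A j = {}" if "l \<in> {1..n} - {j}" for l
    using A that j unfolding is_alloc_def by blast
  have fin_A: "finite (A l)" if "l \<in> {1..n}" for l
    using A_sub[OF that] M by (rule finite_subset)
  obtain g where g: "inj_on g (A j - B)" "g ` (A j - B) \<subseteq> B - A j" "\<forall>x\<in>A j - B. g x \<le> x"
    using dominates_diff[OF fin_A[OF j] dom] unfolding dominates_def by blast
  define X where "X l = {x \<in> A j - B. g x \<in> A l}" for l
  have X_sub: "X l \<subseteq> A j - B" for l
    unfolding X_def by blast
  have "mu \<le> bval v i ((A l - B) \<union> X l)" if l: "l \<in> {1..n} - {j}" for l
  proof -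
    have "bval v i (A l) \<le> bval v i ((A l - B) \<union> X l)"
      unfolding bval_def
    proof (rule sum_le_exchange)
      show "finite (X l)" using finite_subset[OF X_sub] fin_A[OF j] by blast
      show "A l \<inter> X l = {}" using X_sub A_disj[OF l] by blast
      show "inj_on g (X l)" using g(1) X_sub by (rule inj_on_subset)
      show "g ` X l \<subseteq> A l \<inter> B" using g(2) unfolding X_def by blast
      show "\<forall>x\<in>X l. v i (g x) \<le> v i x"
      proof
        fix x assume "x \<in> X l"
        then have "x \<in> A j - B"
          using X_sub by blast
        then have "g x \<in> M" "x \<in> M" "g x \<le> x"
          using g(2,3) A_sub[OF j] B by auto
        then show "v i (g x) \<le> v i x"
          using mono by blast
      qed
    qed (use fin_A l A_sub nonpos in auto)
    then show ?thesis using bundles l by fastforce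
  qed
  moreover have "finite ({1..n} - {j})" "card ({1..n} - {j}) = n - 1"
    using j by auto
  ultimately show ?thesis
    using redistribute_bundle_partition[OF A j B g(2)] M n
    unfolding X_def by (intro mms_geI) auto
qed

theorem lemma16:
  fixes n m :: nat and v :: "nat \<Rightarrow> nat \<Rightarrow> real" and i :: nat and B :: "nat set"
  assumes "ordered_instance n m v"
    and "i \<in> {1..n}"
    and "B \<subseteq> {1..m}"
    and "bval v i B \<ge> mms v i n {1..m}"
    and "\<forall>i'\<in>{1..n} - {i}. \<exists>A. mms_partition v i' n {1..m} A \<and>
            (\<exists>j\<in>{1..n}. dominates B (A j))"
  shows "valid_single_reduction n m v i B"
  unfolding valid_single_reduction_def
proof (intro conjI ballI)
  show "bval v i B \<ge> mms v i n {1..m}" by fact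
next
  fix i' assume i': "i' \<in> {1..n} - {i}"
  then have "n \<ge> 2" using assms(2) by auto
  obtain A j where "mms_partition v i' n {1..m} A" "j \<in> {1..n}" "dominates B (A j)"
    using assms(5) i' by blast
  moreover have "\<forall>a\<in>{1..m}. v i' a \<le> 0"
    using assms(1) i' unfolding ordered_instance_def by blast
  moreover have "\<forall>a\<in>{1..m}. \<forall>b\<in>{1..m}. a \<le> b \<longrightarrow> v i' a \<le> v i' b"
    using ordered_instance_mono[OF assms(1)] i' by blast
  ultimately show "mms v i' (n - 1) ({1..m} - B) \<ge> mms v i' n {1..m}"
    using \<open>n \<ge> 2\<close> assms(3) unfolding mms_partition_def
    by (intro mms_ge_remove_dominating_bundle) auto
qed

end
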